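(* Let $k$ be a field, $(C,\Delta)$ a coassociative coalgebra over $k$, and $(L,B)$ a Lie–Rinehart pair. Let $n\ge0$ and $f\in Alt^n(L,B)$ be such that its induced map $F$ is $Hom(C,B)$-linear. Then $\delta F$, i.e. the map induced by $df\in Alt^{n+1}(L,B)$, is $Hom(C,B)$-linear. Consequently the $Hom(C,B)$-linear elements of the TD Chevalley–Eilenberg complex $(TDalt^\bullet(Hom(C,L),Hom(C,B)),\delta)$ form a subcomplex (the TD Lie–Rinehart complex).
   Context: A Lie–Rinehart pair $(L,B)$: $(L,\phi)$ is a Lie algebra with $\phi(x,y)=[x,y]$; $(B,\nu)$ is an associative algebra with $\nu(a,b)=ab$; $L$ is a left $B$-module via $\mu:B\otimes L\to L$, $\mu(a,x)=ax$; $B$ is a Lie module over $L$ via $\psi:L\otimes B\to B$ with $\psi(x,ab)=a\psi(x,b)+\psi(x,a)b$; and $\psi(ax,b)=a\psi(x,b)$ and $[x,ay]=\psi(x,a)y+a[x,y]$ for all $a,b\in B$, $x,y\in L$. Iterated coproduct $\Delta^{(m-1)}:C\to C^{\otimes m}$, $\Delta^{(0)}=\mathrm{id}$, $\Delta^{(m-1)}=(\Delta\otimes1\otimes\dots\otimes1)\circ\Delta^{(m-2)}$, written $\sum c_{(1)}\otimes\dots\otimes c_{(m)}$. $Alt^n(L,B)$: skew symmetric linear maps $L^{\otimes n}\to B$, $Alt^0(L,B)=B$. The map induced by $f\in Alt^n(L,B)$ is $F(g_1\otimes\dots\otimes g_n)(c)=\sum f(g_1(c_{(1)})\otimes\dots\otimes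 g_n(c_{(n)}))$ for $g_j\in Hom(C,L)$. Chevalley–Eilenberg differential: $df(x_1,\dots,x_{n+1})=\sum_{i}(-1)^{i+1}\psi(x_i,f(x_1,\dots,\hat{x_i},\dots,x_{n+1}))+\sum_{j<k}(-1)^{j+k}f([x_j,x_k],x_1,\dots,\hat{x_j},\dots,\hat{x_k},\dots,x_{n+1})$; the TD differential $\delta F$ of the induced map $F$ is the map induced by $df$. Let $\bar\mu:Hom(C,B)\otimes Hom(C,L)\to Hom(C,L)$, $\bar\mu(\beta,g)(c)=\sum\beta(c_{(1)})g(c_{(2)})$. The induced map $F$ of $f\in Alt^n(L,B)$ is called $Hom(C,B)$-linear if for every $1\le i\le n$, all $\beta\in Hom(C,B)$, $g_1,\dots,g_n\in Hom(C,L)$ and $c\in C$ (with $\Delta^{(n)}(c)=\sum c_{(1)}\otimes\dots\otimes c_{(n+1)}$): $$F(g_1,\dots,g_{i-1},\bar\mu(\beta,g_i),g_{i+1},\dots,g_n)(c)=\sum\beta(c_{(i)})\,f\big(g_1(c_{(1)}),\dots,g_{i-1}(c_{(i-1)}),g_i(c_{(i+1)}),\dots,g_n(c_{(n+1)})\big),$$ where the left side equals $\sum f(g_1(c_{(1)}),\dots,g_{i-1}(c_{(i-1)}),\beta(c_{(i)})g_i(c_{(i+1)}),g_{i+1}(c_{(i+2)}),\dots,g_n(c_{(n+1)}))$. (For $n=0$ the condition is vacuous.) *)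

theory Defs
  imports Main "HOL.Vector_Spaces"
begin

text \<open>Vector spaces over a field 'k are encoded by their scalar multiplications
  (locale vector_space).  Multilinear maps in n arguments are functions on lists
  of length n, linear in every position.\<close>

definition multilinear ::
  "('k::field \<Rightarrow> 'v::ab_group_add \<Rightarrow> 'v) \<Rightarrow> ('k \<Rightarrow> 'w::ab_group_add \<Rightarrow> 'w) \<Rightarrow> nat \<Rightarrow> ('v list \<Rightarrow> 'w) \<Rightarrow> bool" where
  "multilinear sV sW n f \<longleftrightarrow>
     (\<forall>xs i. length xs = n \<and> i < n \<longrightarrow> Vector_Spaces.linear sV sW (\<lambda>x. f (xs[i := x])))"

definition skew :: "nat \<Rightarrow> ('v list \<Rightarrow> 'w::ab_group_add) \<Rightarrow> bool" where
  "skew n f \<longleftrightarrow>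
     (\<forall>xs i j. length xs = n \<and> i < n \<and> j < n \<and> i \<noteq> j \<longrightarrow>
        f (xs[i := xs ! j, j := xs ! i]) = - f xs)"

definition Alt ::
  "('k::field \<Rightarrow> 'l::ab_group_add \<Rightarrow> 'l) \<Rightarrow> ('k \<Rightarrow> 'b::ab_group_add \<Rightarrow> 'b) \<Rightarrow> nat \<Rightarrow> ('l list \<Rightarrow> 'b) \<Rightarrow> bool" where
  "Alt sL sB n f \<longleftrightarrow> multilinear sL sB n f \<and> skew n f"

text \<open>Equality of two formal sums of elementary tensors in V^{\<otimes>m} (each term a list of
  length m), tested against all m-linear functionals into the ground field.\<close>
definition tensor_eq ::
  "('k::field \<Rightarrow> 'v::ab_group_add \<Rightarrow> 'v) \<Rightarrow> nat \<Rightarrow> 'v list list \<Rightarrow> 'v list list \<Rightarrow> bool" where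
  "tensor_eq sV m ts us \<longleftrightarrow>
     (\<forall>h. multilinear sV ((*) :: 'k \<Rightarrow> 'k \<Rightarrow> 'k) m h \<longrightarrow>
          sum_list (map h ts) = sum_list (map h us))"

text \<open>A coproduct is given in Sweedler form: \<Delta> c is a list of pairs (c1,c2) representing
  \<Sum> c1 \<otimes> c2.\<close>
definition pl :: "'c \<times> 'c \<Rightarrow> 'c list" where "pl p = [fst p, snd p]"

definition coalgebra ::
  "('k::field \<Rightarrow> 'c::ab_group_add \<Rightarrow> 'c) \<Rightarrow> ('c \<Rightarrow> ('c \<times> 'c) list) \<Rightarrow> bool" where
  "coalgebra sC \<Delta> \<longleftrightarrow>
     vector_space sC \<and>
     \<comment> \<open>\<Delta> is k-linear C \<rightarrow> C \<otimes> C\<close>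
     (\<forall>a c c'. tensor_eq sC 2 (map pl (\<Delta> (sC a c + c')))
                 (map (\<lambda>p. [sC a (fst p), snd p]) (\<Delta> c) @ map pl (\<Delta> c'))) \<and>
     \<comment> \<open>coassociativity (\<Delta> \<otimes> 1) \<Delta> = (1 \<otimes> \<Delta>) \<Delta>\<close>
     (\<forall>c. tensor_eq sC 3
            (concat (map (\<lambda>p. map (\<lambda>q. [fst q, snd q, snd p]) (\<Delta> (fst p))) (\<Delta> c)))
            (concat (map (\<lambda>p. map (\<lambda>q. [fst p, fst q, snd q]) (\<Delta> (snd p))) (\<Delta> c))))"

text \<open>Iterated coproduct: itcop \<Delta> m c represents \<Delta>^{(m)} c \<in> C^{\<otimes>(m+1)},
  with \<Delta>^{(0)} = id and \<Delta>^{(m)} = (\<Delta> \<otimes> 1 \<otimes> ... \<otimes> 1) \<circ> \<Delta>^{(m-1)}.\<close>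
fun itcop :: "('c \<Rightarrow> ('c \<times> 'c) list) \<Rightarrow> nat \<Rightarrow> 'c \<Rightarrow> 'c list list" where
  "itcop \<Delta> 0 c = [[c]]"
| "itcop \<Delta> (Suc m) c =
     concat (map (\<lambda>t. map (\<lambda>q. fst q # snd q # tl t) (\<Delta> (hd t))) (itcop \<Delta> m c))"

definition del :: "nat \<Rightarrow> 'a list \<Rightarrow> 'a list" where
  "del i xs = take i xs @ drop (Suc i) xs"

definition bilinear ::
  "('k::field \<Rightarrow> 'u::ab_group_add \<Rightarrow> 'u) \<Rightarrow> ('k \<Rightarrow> 'v::ab_group_add \<Rightarrow> 'v) \<Rightarrow>
   ('k \<Rightarrow> 'w::ab_group_add \<Rightarrow> 'w) \<Rightarrow> ('u \<Rightarrow> 'v \<Rightarrow> 'w) \<Rightarrow> bool" where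
  "bilinear sU sV sW h \<longleftrightarrow>
     (\<forall>y. Vector_Spaces.linear sU sW (\<lambda>x. h x y)) \<and> (\<forall>x. Vector_Spaces.linear sV sW (h x))"

definition lie_rinehart ::
  "('k::field \<Rightarrow> 'l::ab_group_add \<Rightarrow> 'l) \<Rightarrow> ('k \<Rightarrow> 'b::ab_group_add \<Rightarrow> 'b) \<Rightarrow>
   ('l \<Rightarrow> 'l \<Rightarrow> 'l) \<Rightarrow> ('b \<Rightarrow> 'b \<Rightarrow> 'b) \<Rightarrow> ('b \<Rightarrow> 'l \<Rightarrow> 'l) \<Rightarrow> ('l \<Rightarrow> 'b \<Rightarrow> 'b) \<Rightarrow> bool" where
  "lie_rinehart sL sB br mB \<mu> \<psi> \<longleftrightarrow>
     vector_space sL \<and> vector_space sB \<and>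
     \<comment> \<open>(L, br) Lie algebra\<close>
     bilinear sL sL sL br \<and> (\<forall>x. br x x = 0) \<and>
     (\<forall>x y z. br x (br y z) + br y (br z x) + br z (br x y) = 0) \<and>
     \<comment> \<open>(B, mB) associative algebra\<close>
     bilinear sB sB sB mB \<and> (\<forall>a b c. mB (mB a b) c = mB a (mB b c)) \<and>
     \<comment> \<open>L left B-module via \<mu>\<close>
     bilinear sB sL sL \<mu> \<and> (\<forall>a b x. \<mu> (mB a b) x = \<mu> a (\<mu> b x)) \<and>
     \<comment> \<open>B Lie module over L via \<psi>, acting by derivations\<close>
     bilinear sL sB sB \<psi> \<and>
     (\<forall>x y a. \<psi> (br x y) a = \<psi> x (\<psi> y a) - \<psi> y (\<psi> x a)) \<and>
     (\<forall>x a b. \<psi> x (mB a b) = mB a (\<psi> x b) + mB (\<psi> x a) b) \<and>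
     \<comment> \<open>compatibility conditions\<close>
     (\<forall>a x b. \<psi> (\<mu> a x) b = mB a (\<psi> x b)) \<and>
     (\<forall>x a y. br x (\<mu> a y) = \<mu> (\<psi> x a) y + \<mu> a (br x y))"

text \<open>Chevalley--Eilenberg differential (indices 0-based; the argument list has length n+1).\<close>
definition ce_diff ::
  "('k::field \<Rightarrow> 'b::ab_group_add \<Rightarrow> 'b) \<Rightarrow> ('l \<Rightarrow> 'l \<Rightarrow> 'l) \<Rightarrow> ('l \<Rightarrow> 'b \<Rightarrow> 'b) \<Rightarrow>
   ('l list \<Rightarrow> 'b) \<Rightarrow> 'l list \<Rightarrow> 'b" where
  "ce_diff sB br \<psi> f xs =
     (\<Sum>i<length xs. sB ((-1) ^ i) (\<psi> (xs ! i) (f (del i xs)))) +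
     (\<Sum>k<length xs. \<Sum>j<k.
        sB ((-1) ^ (j + k)) (f (br (xs ! j) (xs ! k) # del j (del k xs))))"

definition induced ::
  "('c \<Rightarrow> ('c \<times> 'c) list) \<Rightarrow> ('l list \<Rightarrow> 'b::ab_group_add) \<Rightarrow> ('c \<Rightarrow> 'l) list \<Rightarrow> 'c \<Rightarrow> 'b" where
  "induced \<Delta> f gs c =
     sum_list (map (\<lambda>t. f (map2 (\<lambda>g x. g x) gs t)) (itcop \<Delta> (length gs - 1) c))"

definition mu_bar ::
  "('c \<Rightarrow> ('c \<times> 'c) list) \<Rightarrow> ('b \<Rightarrow> 'l \<Rightarrow> 'l::ab_group_add) \<Rightarrow> ('c \<Rightarrow> 'b) \<Rightarrow> ('c \<Rightarrow> 'l) \<Rightarrow> 'c \<Rightarrow> 'l" where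
  "mu_bar \<Delta> \<mu> \<beta> g c = sum_list (map (\<lambda>p. \<mu> (\<beta> (fst p)) (g (snd p))) (\<Delta> c))"

definition hom_linear ::
  "('k::field \<Rightarrow> 'c::ab_group_add \<Rightarrow> 'c) \<Rightarrow> ('k \<Rightarrow> 'l::ab_group_add \<Rightarrow> 'l) \<Rightarrow>
   ('k \<Rightarrow> 'b::ab_group_add \<Rightarrow> 'b) \<Rightarrow> ('c \<Rightarrow> ('c \<times> 'c) list) \<Rightarrow> ('b \<Rightarrow> 'b \<Rightarrow> 'b) \<Rightarrow>
   ('b \<Rightarrow> 'l \<Rightarrow> 'l) \<Rightarrow> nat \<Rightarrow> ('l list \<Rightarrow> 'b) \<Rightarrow> bool" where
  "hom_linear sC sL sB \<Delta> mB \<mu> n f \<longleftrightarrow>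
     (\<forall>i \<beta> gs c. i < n \<and> length gs = n \<and> Vector_Spaces.linear sC sB \<beta> \<and>
        (\<forall>g\<in>set gs. Vector_Spaces.linear sC sL g) \<longrightarrow>
        induced \<Delta> f (gs[i := mu_bar \<Delta> \<mu> \<beta> (gs ! i)]) c =
        sum_list (map (\<lambda>t. mB (\<beta> (t ! i)) (f (map2 (\<lambda>g x. g x) gs (del i t))))
                      (itcop \<Delta> n c)))"

end

theory Submission
  imports Defs
begin

text \<open>If the iterated coproduct \<open>\<Delta>^(n)\<close> vanishes identically, both sides of the
  Hom(C,B)-linearity identity for \<open>\<delta>F\<close> are multilinear expressions summed over
  \<open>\<Delta>^(n) c\<close> and \<open>\<Delta>^(n+1) c\<close>, hence zero. Otherwise some product of linear
  functionals is nonzero on some \<open>\<Delta>^(n) c\<close>, and testing the Hom(C,B)-linearity of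
  \<open>F\<close> on rank-one maps \<open>x \<mapsto> \<phi>(x) v\<close> shows that \<open>f\<close> itself is B-linear in every argument.
  B-linearity passes from \<open>f\<close> to \<open>df\<close>: the terms produced by the Leibniz rule for the
  anchor \<open>\<psi>\<close> cancel in pairs against those produced by \<open>[x, a y] = \<psi>(x,a) y + a [x, y]\<close>.
  Finally the induced map of a B-linear map is Hom(C,B)-linear, because by coassociativity
  applying \<open>\<Delta>\<close> to any tensor factor of \<open>\<Delta>^(n) c\<close> yields \<open>\<Delta>^(n+1) c\<close>.\<close>

abbreviation apply_all :: "('a \<Rightarrow> 'b) list \<Rightarrow> 'a list \<Rightarrow> 'b list" where
  "apply_all gs xs \<equiv> map2 (\<lambda>g x. g x) gs xs"

lemma vector_space_mult: "vector_space ((*) :: 'k::field \<Rightarrow> 'k \<Rightarrow> 'k)"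
  by unfold_locales (auto simp: algebra_simps)

lemma linear_imp_vector_space_pair: "Vector_Spaces.linear s1 s2 f \<Longrightarrow> vector_space_pair s1 s2"
  by (simp add: linear_iff vector_space_pair_def)

lemma
  assumes "Vector_Spaces.linear s1 s2 f"
  shows linear_map_add: "f (x + y) = f x + f y"
    and linear_map_scale: "f (s1 c x) = s2 c (f x)"
    and linear_map_neg: "f (- x) = - f x"
    and linear_map_diff: "f (x - y) = f x - f y"
    and linear_map_sum: "f (sum g S) = (\<Sum>a\<in>S. f (g a))"
    and linear_map_sum_list: "f (sum_list (map h xs)) = sum_list (map (\<lambda>x. f (h x)) xs)"
proof -
  interpret module_hom s1 s2 f using assms by (simp add: module_hom_iff_linear)
  show "f (x + y) = f x + f y" "f (s1 c x) = s2 c (f x)" "f (- x) = - f x"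
    "f (x - y) = f x - f y" "f (sum g S) = (\<Sum>a\<in>S. f (g a))"
    by (simp_all add: add scale neg diff sum)
  show "f (sum_list (map h xs)) = sum_list (map (\<lambda>x. f (h x)) xs)"
    by (induction xs) (simp_all add: add)
qed

lemma linear_compose_fun:
  "Vector_Spaces.linear s1 s2 f \<Longrightarrow> Vector_Spaces.linear s2 s3 g \<Longrightarrow>
   Vector_Spaces.linear s1 s3 (\<lambda>x. g (f x))"
  using Vector_Spaces.linear_compose[of s1 s2 f s3 g] by (simp add: o_def)

lemma linear_add_fun:
  "Vector_Spaces.linear s1 s2 f \<Longrightarrow> Vector_Spaces.linear s1 s2 g \<Longrightarrow>
   Vector_Spaces.linear s1 s2 (\<lambda>x. f x + g x)"
  by (rule vector_space_pair.linear_compose_add[OF linear_imp_vector_space_pair])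

lemma linear_scale_fun:
  "Vector_Spaces.linear s1 s2 f \<Longrightarrow> Vector_Spaces.linear s1 s2 (\<lambda>x. s2 c (f x))"
  by (rule vector_space_pair.linear_compose_scale_right[OF linear_imp_vector_space_pair])

lemma linear_scale_functional:
  "Vector_Spaces.linear s1 ((*) :: 'k::field \<Rightarrow> 'k \<Rightarrow> 'k) \<phi> \<Longrightarrow> vector_space s2 \<Longrightarrow>
   Vector_Spaces.linear s1 s2 (\<lambda>x. s2 (\<phi> x) w)"
  by (rule vector_space_pair.linear_compose_scale) (simp_all add: linear_iff vector_space_pair_def)

lemma linear_sum_fun:
  "vector_space s1 \<Longrightarrow> vector_space s2 \<Longrightarrow> (\<And>a. a \<in> S \<Longrightarrow> Vector_Spaces.linear s1 s2 (F a)) \<Longrightarrow>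
   Vector_Spaces.linear s1 s2 (\<lambda>x. \<Sum>a\<in>S. F a x)"
  by (rule vector_space_pair.linear_compose_sum) (simp_all add: vector_space_pair_def)

lemma linear_sum_list_fun:
  "vector_space s1 \<Longrightarrow> vector_space s2 \<Longrightarrow> (\<And>a. a \<in> set as \<Longrightarrow> Vector_Spaces.linear s1 s2 (F a)) \<Longrightarrow>
   Vector_Spaces.linear s1 s2 (\<lambda>x. sum_list (map (\<lambda>a. F a x) as))"
  by (induction as)
    (auto intro: linear_add_fun vector_space_pair.linear_zero simp: vector_space_pair_def)

lemma exists_functional_eq_1:
  assumes "vector_space sW" and "w \<noteq> 0"
  shows "\<exists>\<phi>. Vector_Spaces.linear sW ((*) :: 'k::field \<Rightarrow> 'k \<Rightarrow> 'k) \<phi> \<and> \<phi> w = 1"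
proof -
  interpret vector_space_pair sW "(*) :: 'k \<Rightarrow> 'k \<Rightarrow> 'k"
    using assms(1) vector_space_mult by (simp add: vector_space_pair_def)
  have "vs1.independent {w}" using assms(2) by simp
  from linear_independent_extend[OF this, of "\<lambda>_. 1"] show ?thesis by auto
qed

lemma
  assumes "vector_space s"
  shows sum_list_scale_left: "sum_list (map (\<lambda>x. s (a x) v) xs) = s (sum_list (map a xs)) v"
    and sum_list_scale_right: "s c (sum_list (map g xs)) = sum_list (map (\<lambda>x. s c (g x)) xs)"
proof -
  interpret vector_space s by fact
  show "sum_list (map (\<lambda>x. s (a x) v) xs) = s (sum_list (map a xs)) v"
    by (induction xs) (simp_all add: scale_left_distrib)
  show "s c (sum_list (map g xs)) = sum_list (map (\<lambda>x. s c (g x)) xs)"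
    by (induction xs) (simp_all add: scale_right_distrib)
qed

lemma sum_list_sum_swap:
  "sum_list (map (\<lambda>x. \<Sum>e\<in>E. F x e) xs) = (\<Sum>e\<in>E. sum_list (map (\<lambda>x. F x e) xs))"
  by (induction xs) (auto simp: sum.distrib)

lemma sum_list_swap:
  fixes F :: "'p \<Rightarrow> 'q \<Rightarrow> 'a::comm_monoid_add"
  shows "sum_list (map (\<lambda>p. sum_list (map (F p) qs)) ps) =
         sum_list (map (\<lambda>q. sum_list (map (\<lambda>p. F p q) ps)) qs)"
  by (induction ps) (simp_all add: sum_list_addf)

lemma sum_list_concat_map:
  "sum_list (map M (concat (map F xs))) = sum_list (map (\<lambda>x. sum_list (map M (F x))) xs)"
  by (induction xs) auto

lemma apply_all_update_arg:
  "length gs = length xs \<Longrightarrow> j < length xs \<Longrightarrow>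
   apply_all gs (xs[j := x]) = (apply_all gs xs)[j := (gs ! j) x]"
  by (rule nth_equalityI) (auto simp: nth_list_update)

lemma apply_all_update_fun:
  "length gs = length xs \<Longrightarrow> j < length xs \<Longrightarrow>
   apply_all (gs[j := g]) xs = (apply_all gs xs)[j := g (xs ! j)]"
  by (rule nth_equalityI) (auto simp: nth_list_update)

lemma take_drop_Cons_Cons_update:
  assumes "length xs = m" "i < m" "j < m" "j \<noteq> i"
  shows "take i (xs[j := x]) @ a # b # drop (Suc i) (xs[j := x]) =
         (take i xs @ a # b # drop (Suc i) xs)[(if j < i then j else Suc j) := x]"
proof (cases "j < i")
  case True
  then show ?thesis
    using assms by (simp add: take_update_swap drop_update_cancel list_update_append1)
next
  case False
  with assms have "i < j" by simp
  then obtain d where d: "j = Suc i + d" using less_imp_Suc_add by blast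
  then have "drop (Suc i) (xs[j := x]) = (drop (Suc i) xs)[d := x]"
    using drop_update_swap[of "Suc i" j xs x] by simp
  with False d assms show ?thesis
    by (simp add: take_update_cancel list_update_append)
qed

lemma length_del: "a < length xs \<Longrightarrow> length (del a xs) = length xs - 1"
  by (simp add: del_def)

lemma nth_del:
  "a < length xs \<Longrightarrow> p < length xs - 1 \<Longrightarrow> del a xs ! p = (if p < a then xs ! p else xs ! Suc p)"
  by (auto simp: del_def nth_append min_def)

lemma del_0: "del 0 xs = tl xs"
  by (simp add: del_def drop_Suc)

lemma del_update_same: "del i (xs[i := u]) = del i xs"
  by (simp add: del_def take_update_cancel drop_update_cancel)

definition pos_after_del :: "nat \<Rightarrow> nat \<Rightarrow> nat" where
  "pos_after_del a i = (if i < a then i else i - 1)"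

lemma del_update:
  "a \<noteq> i \<Longrightarrow> i < length xs \<Longrightarrow> a < length xs \<Longrightarrow> del a (xs[i := u]) = (del a xs)[pos_after_del a i := u]"
  by (rule nth_equalityI) (auto simp: length_del nth_del pos_after_del_def nth_list_update)

lemma pos_after_del_less_length:
  "a \<noteq> i \<Longrightarrow> i < length xs \<Longrightarrow> a < length xs \<Longrightarrow> pos_after_del a i < length (del a xs)"
  by (auto simp: pos_after_del_def length_del)

lemma nth_pos_after_del:
  "a \<noteq> i \<Longrightarrow> i < length xs \<Longrightarrow> a < length xs \<Longrightarrow> del a xs ! pos_after_del a i = xs ! i"
  by (auto simp: pos_after_del_def nth_del length_del)

lemma del_del_less: "a < i \<Longrightarrow> i < length xs \<Longrightarrow> del (i - 1) (del a xs) = del a (del i xs)"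
  by (rule nth_equalityI) (auto simp: length_del nth_del)

lemma del_swap_Suc:
  "Suc p < length ys \<Longrightarrow> del p (ys[p := ys ! Suc p, Suc p := ys ! p]) = del (Suc p) ys"
  by (rule nth_equalityI) (auto simp: length_del nth_del nth_list_update less_Suc_eq)

section \<open>Multilinear maps and formal tensors\<close>

lemma multilinearI:
  "(\<And>xs i. length xs = n \<Longrightarrow> i < n \<Longrightarrow> Vector_Spaces.linear sV sW (\<lambda>x. M (xs[i := x]))) \<Longrightarrow>
   multilinear sV sW n M"
  by (auto simp: multilinear_def)

lemma multilinear_linear_at:
  "multilinear sV sW n M \<Longrightarrow> length xs = n \<Longrightarrow> i < n \<Longrightarrow>
   Vector_Spaces.linear sV sW (\<lambda>x. M (xs[i := x]))"
  by (auto simp: multilinear_def)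

lemma multilinear_linear_head:
  "multilinear sV sW (Suc n) M \<Longrightarrow> length R = n \<Longrightarrow> Vector_Spaces.linear sV sW (\<lambda>x. M (x # R))"
  using multilinear_linear_at[of sV sW "Suc n" M "undefined # R" 0] by simp

lemma multilinear_fix_head:
  "multilinear sV sW (Suc n) M \<Longrightarrow> multilinear sV sW n (\<lambda>zs. M (y # zs))"
  by (rule multilinearI) (use multilinear_linear_at[of sV sW "Suc n" M "y # _" "Suc _"] in simp)

lemma multilinear_fix_outer:
  fixes M :: "'v::ab_group_add list \<Rightarrow> 'w::ab_group_add"
  shows "multilinear sV sW (length P + k + length Q) M \<Longrightarrow> multilinear sV sW k (\<lambda>zs. M (P @ zs @ Q))"
proof (rule multilinearI)
  fix xs :: "'v list" and i
  assume "multilinear sV sW (length P + k + length Q) M" "length xs = k" "i < k"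
  then show "Vector_Spaces.linear sV sW (\<lambda>x. M (P @ xs[i := x] @ Q))"
    using multilinear_linear_at[of sV sW _ M "P @ xs @ Q" "length P + i"]
    by (simp add: list_update_append)
qed

lemma multilinear_compose_linear:
  "multilinear sV sW n M \<Longrightarrow> Vector_Spaces.linear sW sU \<phi> \<Longrightarrow> multilinear sV sU n (\<lambda>x. \<phi> (M x))"
  by (rule multilinearI) (rule linear_compose_fun[OF multilinear_linear_at])

lemma multilinear_apply_all:
  fixes gs :: "('c::ab_group_add \<Rightarrow> 'l::ab_group_add) list"
  assumes "multilinear sL sW m D" and "\<forall>g\<in>set gs. Vector_Spaces.linear sC sL g" and "length gs = m"
  shows "multilinear sC sW m (\<lambda>s. D (apply_all gs s))"
proof (rule multilinearI)
  fix xs :: "'c list" and j assume "length xs = m" and "j < m"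
  with assms show "Vector_Spaces.linear sC sW (\<lambda>x. D (apply_all gs (xs[j := x])))"
    by (simp add: apply_all_update_arg linear_compose_fun[OF _ multilinear_linear_at[OF assms(1)]])
qed

lemma multilinear_map2_scale:
  assumes "vector_space sW"
  shows "multilinear sV sW (length ys) M \<Longrightarrow> length as = length ys \<Longrightarrow>
    M (map2 sV as ys) = sW (prod_list as) (M ys)"
proof (induction ys arbitrary: as M)
  case Nil
  then show ?case by (simp add: vector_space.vector_space_assms(4)[OF assms])
next
  case (Cons y ys)
  then obtain a as' where as: "as = a # as'" by (cases as) auto
  have "M (map2 sV as (y # ys)) = sW a (M (y # map2 sV as' ys))"
    using linear_map_scale[OF multilinear_linear_at[OF Cons.prems(1), of "y # map2 sV as' ys" 0]]
      Cons.prems as by simp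
  also have "M (y # map2 sV as' ys) = sW (prod_list as') (M (y # ys))"
    using Cons.IH[OF multilinear_fix_head] Cons.prems as by simp
  finally show ?case
    using as by (simp add: vector_space.vector_space_assms(3)[OF assms])
qed

lemma skew_nth_to_front:
  assumes "vector_space sW" and "skew n f"
  shows "length ys = n \<Longrightarrow> p < n \<Longrightarrow> f ys = sW ((-1) ^ p) (f (ys ! p # del p ys))"
proof (induction p arbitrary: ys)
  case 0
  then show ?case by (cases ys) (auto simp: del_0 vector_space.vector_space_assms(4)[OF assms(1)])
next
  case (Suc p)
  interpret W: vector_space sW by fact
  define zs where "zs = ys[p := ys ! Suc p, Suc p := ys ! p]"
  have "f zs = - f ys"
    using assms(2) Suc.prems unfolding skew_def zs_def by (metis Suc_lessD n_not_Suc_n)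
  moreover have "f zs = sW ((-1) ^ p) (f (zs ! p # del p zs))"
    using Suc.IH Suc.prems by (simp add: zs_def)
  moreover have "zs ! p = ys ! Suc p" and "del p zs = del (Suc p) ys"
    using Suc.prems by (simp_all add: zs_def del_swap_Suc)
  ultimately show ?case by (simp add: W.scale_minus_left[symmetric])
qed

definition rank_one :: "('k \<Rightarrow> 'v \<Rightarrow> 'v) \<Rightarrow> ('c \<Rightarrow> 'k) \<Rightarrow> 'v \<Rightarrow> 'c \<Rightarrow> 'v" where
  "rank_one s \<phi> v x = s (\<phi> x) v"

lemma linear_rank_one:
  "Vector_Spaces.linear sC ((*) :: 'k::field \<Rightarrow> 'k \<Rightarrow> 'k) \<phi> \<Longrightarrow> vector_space s \<Longrightarrow>
   Vector_Spaces.linear sC s (rank_one s \<phi> v)"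
  unfolding rank_one_def[abs_def] by (rule linear_scale_functional)

lemma apply_all_rank_one:
  "length \<phi>s = length vs \<Longrightarrow> length t = length vs \<Longrightarrow>
   apply_all (map2 (rank_one s) \<phi>s vs) t = map2 s (apply_all \<phi>s t) vs"
  by (rule nth_equalityI) (simp_all add: rank_one_def)

definition prod_apply :: "('c \<Rightarrow> 'k::field) list \<Rightarrow> 'c list \<Rightarrow> 'k" where
  "prod_apply \<phi>s t = prod_list (apply_all \<phi>s t)"

lemma prod_apply_Cons [simp]: "prod_apply (\<phi> # \<phi>s) (x # t) = \<phi> x * prod_apply \<phi>s t"
  by (simp add: prod_apply_def)

lemma tensor_eq_trans [trans]: "tensor_eq sV m X Y \<Longrightarrow> tensor_eq sV m Y Z \<Longrightarrow> tensor_eq sV m X Z"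
  by (simp add: tensor_eq_def)

lemma tensor_eq_multilinear:
  assumes "vector_space sW" and "tensor_eq sV m X Y" and "multilinear sV sW m M"
  shows "sum_list (map M X) = sum_list (map M Y)"
proof (rule ccontr)
  let ?w = "sum_list (map M X) - sum_list (map M Y)"
  assume "sum_list (map M X) \<noteq> sum_list (map M Y)"
  then obtain \<phi> :: "_ \<Rightarrow> 'a" where \<phi>: "Vector_Spaces.linear sW (*) \<phi>" "\<phi> ?w = 1"
    using exists_functional_eq_1[OF assms(1), of ?w] by auto
  have "sum_list (map (\<lambda>x. \<phi> (M x)) X) = sum_list (map (\<lambda>x. \<phi> (M x)) Y)"
    using assms(2) multilinear_compose_linear[OF assms(3) \<phi>(1)] by (auto simp: tensor_eq_def)
  then have "\<phi> ?w = 0"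
    by (simp add: linear_map_diff[OF \<phi>(1)] o_def
        linear_map_sum_list[OF \<phi>(1), of "\<lambda>x. x", simplified])
  with \<phi>(2) show False by simp
qed

lemma finite_coordinates:
  fixes sC :: "'k::field \<Rightarrow> 'c::ab_group_add \<Rightarrow> 'c"
  assumes vsC: "vector_space sC" and "finite U"
  obtains E A where "finite E" "\<And>e. Vector_Spaces.linear sC ((*) :: 'k \<Rightarrow> _) (A e)"
    "\<And>u. u \<in> U \<Longrightarrow> u = (\<Sum>e\<in>E. sC (A e u) e)"
proof -
  interpret C: vector_space sC by fact
  interpret P: vector_space_pair sC "(*) :: 'k \<Rightarrow> 'k \<Rightarrow> 'k"
    using vsC vector_space_mult by (simp add: vector_space_pair_def)
  interpret CC: vector_space_pair sC sC
    using vsC by (simp add: vector_space_pair_def)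
  obtain E where E: "E \<subseteq> U" "C.independent E" "U \<subseteq> C.span E"
    using C.maximal_independent_subset by blast
  have "finite E" using E(1) \<open>finite U\<close> finite_subset by blast
  have "\<exists>\<phi>. Vector_Spaces.linear sC ((*) :: 'k \<Rightarrow> _) \<phi> \<and> (\<forall>x\<in>E. \<phi> x = (if x = e then 1 else 0))"
    for e using P.linear_independent_extend[OF E(2), of "\<lambda>x. if x = e then 1 else 0"] by blast
  then obtain A where A: "\<And>e. Vector_Spaces.linear sC ((*) :: 'k \<Rightarrow> _) (A e)"
    "\<And>e x. x \<in> E \<Longrightarrow> A e x = (if x = e then 1 else 0)"
    by metis
  have "u = (\<Sum>e\<in>E. sC (A e u) e)" if "u \<in> U" for u
  proof (rule CC.linear_eq_on[of "\<lambda>u. u" _ u E])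
    show "Vector_Spaces.linear sC sC (\<lambda>u. u)" using C.linear_id by (simp add: id_def)
    show "Vector_Spaces.linear sC sC (\<lambda>u. \<Sum>e\<in>E. sC (A e u) e)"
      by (intro linear_sum_fun linear_scale_functional A vsC)
    show "u \<in> C.span E" using that E(3) by blast
    fix b assume b: "b \<in> E"
    have "(\<Sum>e\<in>E. sC (A e b) e) = (\<Sum>e\<in>E. if b = e then e else 0)"
      by (rule sum.cong) (auto simp: A(2)[OF b])
    with b \<open>finite E\<close> show "b = (\<Sum>e\<in>E. sC (A e b) e)" by simp
  qed
  with that \<open>finite E\<close> A(1) show ?thesis by blast
qed

lemma multilinear_head_coordinates:
  assumes "multilinear sV sW (Suc n) M" and "length R = n" and "u = (\<Sum>e\<in>E. sV (A e) e)"
  shows "M (u # R) = (\<Sum>e\<in>E. sW (A e) (M (e # R)))"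
proof -
  have lin: "Vector_Spaces.linear sV sW (\<lambda>x. M (x # R))"
    by (rule multilinear_linear_head[OF assms(1,2)])
  show ?thesis
    unfolding assms(3) by (simp add: linear_map_sum[OF lin] linear_map_scale[OF lin])
qed

lemma sum_list_multilinear_expand_head:
  assumes vsW: "vector_space sW" and M: "multilinear sV sW (Suc m) M"
    and X: "\<forall>x\<in>set X. length (snd x) = Suc m"
    and coord: "\<And>u. u \<in> (\<lambda>x. hd (snd x)) ` set X \<Longrightarrow> u = (\<Sum>e\<in>E. sV (A e u) e)"
  shows "sum_list (map (\<lambda>x. sW (fst x) (M (snd x))) X) =
    (\<Sum>e\<in>E. sum_list (map (\<lambda>x. sW (fst x * A e (hd (snd x))) (M (e # tl (snd x)))) X))"
proof -
  interpret W: vector_space sW by (rule vsW)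
  have "sW (fst x) (M (snd x)) = (\<Sum>e\<in>E. sW (fst x * A e (hd (snd x))) (M (e # tl (snd x))))"
    if x: "x \<in> set X" for x
  proof -
    obtain u R where sx: "snd x = u # R" and "length R = m"
      using X x by (cases "snd x") auto
    with x have "u \<in> (\<lambda>x. hd (snd x)) ` set X" by force
    from multilinear_head_coordinates[OF M \<open>length R = m\<close> coord[OF this]] sx show ?thesis
      by (simp add: W.scale_sum_right W.scale_scale)
  qed
  then show ?thesis
    by (simp add: sum_list_sum_swap[symmetric] cong: map_cong)
qed

text \<open>Weights are needed for the induction: expanding the first tensor factor in coordinates
  moves the coordinate functionals into the weights.\<close>

lemma weighted_sum_multilinear_eq_0:
  fixes sC :: "'k::field \<Rightarrow> 'c::ab_group_add \<Rightarrow> 'c" and sW :: "'k \<Rightarrow> 'w::ab_group_add \<Rightarrow> 'w"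
  assumes vsC: "vector_space sC" and vsW: "vector_space sW"
  shows "\<forall>x\<in>set X. length (snd x) = m \<Longrightarrow>
    (\<And>\<phi>s. length \<phi>s = m \<Longrightarrow> \<forall>\<phi>\<in>set \<phi>s. Vector_Spaces.linear sC (*) \<phi> \<Longrightarrow>
       sum_list (map (\<lambda>x. fst x * prod_apply \<phi>s (snd x)) X) = 0) \<Longrightarrow>
    multilinear sC sW m M \<Longrightarrow> sum_list (map (\<lambda>x. sW (fst x) (M (snd x))) X) = 0"
proof (induction m arbitrary: X M)
  case 0
  interpret W: vector_space sW by (rule vsW)
  from 0 have "sum_list (map fst X) = 0" and "\<forall>x\<in>set X. snd x = []" by (auto simp: prod_apply_def)
  then show ?case
    by (simp add: sum_list_scale_left[OF vsW] W.scale_zero_left cong: map_cong)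
next
  case (Suc m)
  interpret W: vector_space sW by (rule vsW)
  obtain E A where E: "finite E" "\<And>e. Vector_Spaces.linear sC ((*) :: 'k \<Rightarrow> _) (A e)"
    "\<And>u. u \<in> (\<lambda>x. hd (snd x)) ` set X \<Longrightarrow> u = (\<Sum>e\<in>E. sC (A e u) e)"
    using finite_coordinates[OF vsC, of "(\<lambda>x. hd (snd x)) ` set X"] by auto
  have split_hd: "snd x = hd (snd x) # tl (snd x)" if "x \<in> set X" for x
    using Suc.prems(1) that by (cases "snd x") auto
  have "sum_list (map (\<lambda>x. sW (fst x) (M (snd x))) X) =
      (\<Sum>e\<in>E. sum_list (map (\<lambda>x. sW (fst x * A e (hd (snd x))) (M (e # tl (snd x)))) X))"
    by (rule sum_list_multilinear_expand_head[OF vsW Suc.prems(3,1) E(3)])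
  also have "\<dots> = 0"
  proof (rule sum.neutral, rule ballI)
    fix e
    let ?X = "map (\<lambda>x. (fst x * A e (hd (snd x)), tl (snd x))) X"
    have "sum_list (map (\<lambda>x. sW (fst x) (M (e # snd x))) ?X) = 0"
    proof (rule Suc.IH)
      show "\<forall>x\<in>set ?X. length (snd x) = m" using Suc.prems(1) by auto
      show "multilinear sC sW m (\<lambda>zs. M (e # zs))" using multilinear_fix_head[OF Suc.prems(3)] .
      fix \<phi>s :: "('c \<Rightarrow> 'k) list"
      assume "length \<phi>s = m" "\<forall>\<phi>\<in>set \<phi>s. Vector_Spaces.linear sC (*) \<phi>"
      then have "sum_list (map (\<lambda>x. fst x * prod_apply (A e # \<phi>s) (snd x)) X) = 0"
        using Suc.prems(2) E(2) by simp
      moreover have "map (\<lambda>x. fst x * prod_apply \<phi>s (snd x)) ?X =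
          map (\<lambda>x. fst x * prod_apply (A e # \<phi>s) (snd x)) X"
        unfolding map_map o_def
        by (rule map_cong[OF refl], subst (2) split_hd) (simp_all add: mult.assoc)
      ultimately show "sum_list (map (\<lambda>x. fst x * prod_apply \<phi>s (snd x)) ?X) = 0"
        by (simp only:)
    qed
    then show "sum_list (map (\<lambda>x. sW (fst x * A e (hd (snd x))) (M (e # tl (snd x)))) X) = 0"
      by (simp add: o_def)
  qed
  finally show ?case .
qed

lemma tensor_eq_Nil_if_prod_apply:
  fixes sC :: "'k::field \<Rightarrow> 'c::ab_group_add \<Rightarrow> 'c"
  assumes "vector_space sC" and "\<forall>t\<in>set T. length t = m"
    and "\<And>\<phi>s. length \<phi>s = m \<Longrightarrow> \<forall>\<phi>\<in>set \<phi>s. Vector_Spaces.linear sC ((*) :: 'k \<Rightarrow> _) \<phi> \<Longrightarrow>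
      sum_list (map (prod_apply \<phi>s) T) = 0"
  shows "tensor_eq sC m T []"
  unfolding tensor_eq_def
proof (intro allI impI)
  fix h :: "'c list \<Rightarrow> 'k" assume h: "multilinear sC (*) m h"
  have "sum_list (map (\<lambda>x. fst x * h (snd x)) (map (Pair 1) T)) = 0"
  proof (rule weighted_sum_multilinear_eq_0[OF assms(1) vector_space_mult _ _ h])
    show "\<forall>x\<in>set (map (Pair 1) T). length (snd x) = m" using assms(2) by auto
    fix \<phi>s :: "('c \<Rightarrow> 'k) list"
    assume "length \<phi>s = m" "\<forall>\<phi>\<in>set \<phi>s. Vector_Spaces.linear sC (*) \<phi>"
    then show "sum_list (map (\<lambda>x. fst x * prod_apply \<phi>s (snd x)) (map (Pair 1) T)) = 0"
      using assms(3) by (simp add: o_def)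
  qed
  then show "sum_list (map h T) = sum_list (map h [])" by (simp add: o_def)
qed

section \<open>Iterated coproducts\<close>

locale coassoc_coalgebra =
  fixes sC :: "'k::field \<Rightarrow> 'c::ab_group_add \<Rightarrow> 'c" and \<Delta> :: "'c \<Rightarrow> ('c \<times> 'c) list"
  assumes coalgebra: "coalgebra sC \<Delta>"
begin

lemma vector_space_C: "vector_space sC"
  using coalgebra by (simp add: coalgebra_def)

lemma coproduct_linear:
  "tensor_eq sC 2 (map pl (\<Delta> (sC a c + c')))
     (map (\<lambda>p. [sC a (fst p), snd p]) (\<Delta> c) @ map pl (\<Delta> c'))"
  using coalgebra by (simp add: coalgebra_def)

lemma coassoc:
  "tensor_eq sC 3
     (concat (map (\<lambda>p. map (\<lambda>q. [fst q, snd q, snd p]) (\<Delta> (fst p))) (\<Delta> c)))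
     (concat (map (\<lambda>p. map (\<lambda>q. [fst p, fst q, snd q]) (\<Delta> (snd p))) (\<Delta> c)))"
  using coalgebra by (simp add: coalgebra_def)

definition coproduct_at :: "nat \<Rightarrow> 'c list list \<Rightarrow> 'c list list" where
  "coproduct_at i X =
     concat (map (\<lambda>s. map (\<lambda>p. take i s @ fst p # snd p # drop (Suc i) s) (\<Delta> (s ! i))) X)"

lemma sum_list_coproduct_at:
  "sum_list (map M (coproduct_at i X)) =
   sum_list (map (\<lambda>s.
     sum_list (map (\<lambda>p. M (take i s @ fst p # snd p # drop (Suc i) s)) (\<Delta> (s ! i)))) X)"
  unfolding coproduct_at_def sum_list_concat_map by (simp add: o_def)

lemma length_coproduct_at:
  "\<forall>s\<in>set X. length s = m \<Longrightarrow> i < m \<Longrightarrow> t \<in> set (coproduct_at i X) \<Longrightarrow> length t = Suc m"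
  by (auto simp: coproduct_at_def)

lemma length_itcop: "t \<in> set (itcop \<Delta> m c) \<Longrightarrow> length t = Suc m"
  by (induction m arbitrary: t) auto

lemma itcop_Suc_coproduct_at_0: "itcop \<Delta> (Suc m) c = coproduct_at 0 (itcop \<Delta> m c)"
proof -
  have "map (\<lambda>q. fst q # snd q # tl t) (\<Delta> (hd t)) =
      map (\<lambda>p. take 0 t @ fst p # snd p # drop (Suc 0) t) (\<Delta> (t ! 0))"
    if "t \<in> set (itcop \<Delta> m c)" for t
    using length_itcop[OF that] by (cases t) auto
  then show ?thesis by (simp add: coproduct_at_def cong: map_cong)
qed

declare itcop.simps(2) [simp del]

lemma linear_sum_coproduct:
  fixes sW :: "'k \<Rightarrow> 'w::ab_group_add \<Rightarrow> 'w"
  assumes vsW: "vector_space sW" and h: "multilinear sC sW 2 h"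
  shows "Vector_Spaces.linear sC sW (\<lambda>x. sum_list (map (\<lambda>p. h [fst p, snd p]) (\<Delta> x)))"
proof -
  interpret W: vector_space sW by fact
  define D where "D x = sum_list (map (\<lambda>p. h [fst p, snd p]) (\<Delta> x))" for x
  have hs: "h [sC a x, y] = sW a (h [x, y])" for a x y
    using linear_map_scale[OF multilinear_linear_at[OF h, of "[x, y]" 0]] by simp
  have D: "D (sC a c + c') = sW a (D c) + D c'" for a c c'
    using tensor_eq_multilinear[OF vsW coproduct_linear h]
    by (simp add: D_def pl_def o_def hs sum_list_scale_right[OF vsW])
  interpret C: vector_space sC by (rule vector_space_C)
  have "D 0 = 0" using D[of 1 0 0] by simp
  then have "D (x + y) = D x + D y" and "D (sC a x) = sW a (D x)" for a x y
    using D[of 1 x y] D[of a x 0] by simp_all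
  then show ?thesis
    unfolding D_def[symmetric] linear_iff using vector_space_C vsW by blast
qed

lemma multilinear_coproduct_at:
  fixes sW :: "'k \<Rightarrow> 'w::ab_group_add \<Rightarrow> 'w"
  assumes vsW: "vector_space sW" and M: "multilinear sC sW (Suc m) M" and i: "i < m"
  shows "multilinear sC sW m
    (\<lambda>s. sum_list (map (\<lambda>p. M (take i s @ fst p # snd p # drop (Suc i) s)) (\<Delta> (s ! i))))"
proof (rule multilinearI)
  fix xs :: "'c list" and j assume l: "length xs = m" and j: "j < m"
  show "Vector_Spaces.linear sC sW (\<lambda>x. sum_list (map (\<lambda>p.
      M (take i (xs[j := x]) @ fst p # snd p # drop (Suc i) (xs[j := x]))) (\<Delta> (xs[j := x] ! i))))"
  proof (cases "j = i")
    case True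
    have "multilinear sC sW 2 (\<lambda>zs. M (take i xs @ zs @ drop (Suc i) xs))"
      by (rule multilinear_fix_outer) (use M l i in simp)
    from linear_sum_coproduct[OF vsW this] True l i show ?thesis
      by (simp add: take_update_cancel drop_update_cancel)
  next
    case False
    have "Vector_Spaces.linear sC sW (\<lambda>x. sum_list (map (\<lambda>p.
        M ((take i xs @ fst p # snd p # drop (Suc i) xs)[(if j < i then j else Suc j) := x]))
        (\<Delta> (xs ! i))))"
      by (rule linear_sum_list_fun[OF vector_space_C vsW], rule multilinear_linear_at[OF M])
        (use l i j in auto)
    then show ?thesis
      by (simp only: take_drop_Cons_Cons_update[OF l i j False] nth_list_update_neq[OF False])
  qed
qed

lemma tensor_eq_coproduct_at:
  assumes "i < m" and "tensor_eq sC m X Y"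
  shows "tensor_eq sC (Suc m) (coproduct_at i X) (coproduct_at i Y)"
  using assms multilinear_coproduct_at[OF vector_space_mult _ assms(1)]
  by (simp add: tensor_eq_def sum_list_coproduct_at)

lemma sum_list_coproduct_at_commute:
  fixes M :: "'c list \<Rightarrow> 'a::comm_monoid_add"
  assumes "\<forall>s\<in>set X. length s = m" and "Suc i < m"
  shows "sum_list (map M (coproduct_at (Suc (Suc i)) (coproduct_at 0 X))) =
         sum_list (map M (coproduct_at 0 (coproduct_at (Suc i) X)))"
  unfolding sum_list_coproduct_at
  apply (rule arg_cong[where f = sum_list], rule map_cong[OF refl])
  subgoal premises prems for s
  proof -
    from assms prems obtain s0 sr where "s = s0 # sr" and "i < length sr" by (cases s) auto
    then show ?thesis
      using sum_list_swap[of "\<lambda>p q. M (fst p # snd p # take i sr @ fst q # snd q # drop (Suc i) sr)"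
          "\<Delta> (sr ! i)" "\<Delta> s0"]
      by (simp add: o_def)
  qed
  done

lemma sum_list_coproduct_at_1_0:
  fixes sW :: "'k \<Rightarrow> 'w::ab_group_add \<Rightarrow> 'w"
  assumes vsW: "vector_space sW" and "\<forall>s\<in>set X. length s = Suc m"
    and M: "multilinear sC sW (Suc (Suc (Suc m))) M"
  shows "sum_list (map M (coproduct_at 1 (coproduct_at 0 X))) =
         sum_list (map M (coproduct_at 0 (coproduct_at 0 X)))"
  unfolding sum_list_coproduct_at
  apply (rule arg_cong[where f = sum_list], rule map_cong[OF refl])
  subgoal premises prems for s
  proof -
    from assms prems obtain s0 sr where s: "s = s0 # sr" and "length sr = m" by (cases s) auto
    then have "multilinear sC sW 3 (\<lambda>zs. M ([] @ zs @ sr))"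
      by (intro multilinear_fix_outer) (use M in \<open>simp add: numeral_3_eq_3\<close>)
    from tensor_eq_multilinear[OF vsW coassoc this] s show ?thesis
      by (simp add: sum_list_concat_map o_def)
  qed
  done

theorem tensor_eq_coproduct_at_itcop:
  "i \<le> m \<Longrightarrow> tensor_eq sC (Suc (Suc m)) (coproduct_at i (itcop \<Delta> m c)) (itcop \<Delta> (Suc m) c)"
proof (induction m arbitrary: i)
  case 0
  then show ?case by (simp add: itcop_Suc_coproduct_at_0 tensor_eq_def)
next
  case (Suc m)
  let ?X = "itcop \<Delta> m c"
  have X: "\<forall>s\<in>set ?X. length s = Suc m" using length_itcop by blast
  consider "i = 0" | "i = 1" | j where "i = Suc (Suc j)"
    by (metis One_nat_def not0_implies_Suc)
  then show ?case
  proof cases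
    case 1
    then show ?thesis by (simp add: tensor_eq_def itcop_Suc_coproduct_at_0)
  next
    case 2
    then show ?thesis
      using sum_list_coproduct_at_1_0[OF vector_space_mult X]
      by (simp add: tensor_eq_def itcop_Suc_coproduct_at_0)
  next
    case (3 j)
    have "tensor_eq sC (Suc (Suc (Suc m)))
        (coproduct_at (Suc (Suc j)) (coproduct_at 0 ?X)) (coproduct_at 0 (coproduct_at (Suc j) ?X))"
      using Suc.prems 3 by (simp add: tensor_eq_def sum_list_coproduct_at_commute[OF X])
    also have "tensor_eq sC (Suc (Suc (Suc m)))
        (coproduct_at 0 (coproduct_at (Suc j) ?X)) (coproduct_at 0 (itcop \<Delta> (Suc m) c))"
      using Suc 3 by (intro tensor_eq_coproduct_at) auto
    finally show ?thesis
      using 3 by (simp add: itcop_Suc_coproduct_at_0)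
  qed
qed

text \<open>Without a counit \<open>\<Delta>^(m)\<close> may vanish identically; then Hom(C,B)-linearity of an
  induced map carries no information about the underlying multilinear map.\<close>

definition itcop_vanishes :: "nat \<Rightarrow> bool" where
  "itcop_vanishes m \<longleftrightarrow> (\<forall>c. tensor_eq sC (Suc m) (itcop \<Delta> m c) [])"

lemma itcop_vanishes_Suc: "itcop_vanishes m \<Longrightarrow> itcop_vanishes (Suc m)"
  using tensor_eq_coproduct_at[of 0 "Suc m" _ "[]"]
  by (simp add: itcop_vanishes_def itcop_Suc_coproduct_at_0 coproduct_at_def)

lemma sum_list_itcop_eq_0:
  "itcop_vanishes m \<Longrightarrow> vector_space sW \<Longrightarrow> multilinear sC sW (Suc m) M \<Longrightarrow>
   sum_list (map M (itcop \<Delta> m c)) = 0"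
  using tensor_eq_multilinear[of sW sC "Suc m" "itcop \<Delta> m c" "[]" M]
  by (simp add: itcop_vanishes_def)

lemma not_itcop_vanishesE:
  assumes "\<not> itcop_vanishes m"
  obtains c \<phi>s where "length \<phi>s = Suc m" "\<forall>\<phi>\<in>set \<phi>s. Vector_Spaces.linear sC (*) \<phi>"
    "sum_list (map (prod_apply \<phi>s) (itcop \<Delta> m c)) \<noteq> 0"
  using assms tensor_eq_Nil_if_prod_apply[OF vector_space_C] length_itcop
  unfolding itcop_vanishes_def by blast

end

section \<open>Lie--Rinehart pairs\<close>

lemma sum_defects_cancel:
  fixes e g :: "nat \<Rightarrow> 'a::ab_group_add"
  assumes i: "i < N" and e: "\<And>a. a < N \<Longrightarrow> a \<noteq> i \<Longrightarrow> e a = (if i < a then g a else - g a)"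
  shows "(\<Sum>a<N. if a = i then 0 else e a) +
    (\<Sum>k<N. \<Sum>j<k. (if j = i then - g k else 0) + (if k = i then g j else 0)) = 0"
proof -
  have below: "(\<Sum>a<N. if a < i then g a else 0) = (\<Sum>a<i. g a)"
    using sum.inter_restrict[of "{..<N}" g "{..<i}"] i by (simp add: Int_absorb1)
  have "(\<Sum>j<k. (if j = i then - g k else 0) + (if k = i then g j else 0)) =
      (if i < k then - g k else 0) + (if k = i then (\<Sum>j<i. g j) else 0)" for k
    by (simp add: sum.distrib)
  then have brackets: "(\<Sum>k<N. \<Sum>j<k. (if j = i then - g k else 0) + (if k = i then g j else 0)) =
      - (\<Sum>a<N. if i < a then g a else 0) + (\<Sum>a<i. g a)"
    using i by (simp add: sum.distrib sum_negf[symmetric] if_distrib[of uminus] cong: if_cong)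
  have "(\<Sum>a<N. if a = i then 0 else e a) =
      (\<Sum>a<N. (if i < a then g a else 0) - (if a < i then g a else 0))"
    using e by (intro sum.cong) auto
  also have "\<dots> = (\<Sum>a<N. if i < a then g a else 0) - (\<Sum>a<i. g a)"
    by (simp add: sum_subtractf below)
  finally show ?thesis using brackets by simp
qed

locale lie_rinehart_pair =
  fixes sL :: "'k::field \<Rightarrow> 'l::ab_group_add \<Rightarrow> 'l" and sB :: "'k \<Rightarrow> 'b::ab_group_add \<Rightarrow> 'b"
    and br :: "'l \<Rightarrow> 'l \<Rightarrow> 'l" and mB :: "'b \<Rightarrow> 'b \<Rightarrow> 'b"
    and \<mu> :: "'b \<Rightarrow> 'l \<Rightarrow> 'l" and \<psi> :: "'l \<Rightarrow> 'b \<Rightarrow> 'b"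
  assumes lie_rinehart: "lie_rinehart sL sB br mB \<mu> \<psi>"
begin

lemma vector_space_L: "vector_space sL"
  and vector_space_B: "vector_space sB"
  and linear_bracket_left: "Vector_Spaces.linear sL sL (\<lambda>x. br x y)"
  and linear_bracket_right: "Vector_Spaces.linear sL sL (br x)"
  and linear_mult_left: "Vector_Spaces.linear sB sB (\<lambda>a. mB a c)"
  and linear_mult_right: "Vector_Spaces.linear sB sB (mB a)"
  and linear_smult_left: "Vector_Spaces.linear sB sL (\<lambda>a. \<mu> a x)"
  and linear_smult_right: "Vector_Spaces.linear sL sL (\<mu> a)"
  and linear_anchor_left: "Vector_Spaces.linear sL sB (\<lambda>x. \<psi> x c)"
  and linear_anchor_right: "Vector_Spaces.linear sB sB (\<psi> x)"
  and bracket_self: "br x x = 0"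
  and anchor_mult: "\<psi> x (mB a c) = mB a (\<psi> x c) + mB (\<psi> x a) c"
  and anchor_smult: "\<psi> (\<mu> a x) c = mB a (\<psi> x c)"
  and bracket_smult: "br x (\<mu> a y) = \<mu> (\<psi> x a) y + \<mu> a (br x y)"
  using lie_rinehart by (simp_all add: lie_rinehart_def bilinear_def)

sublocale L: vector_space sL by (rule vector_space_L)
sublocale B: vector_space sB by (rule vector_space_B)

lemma bracket_anticomm: "br x y = - br y x"
proof -
  have "0 = br (x + y) (x + y)" by (simp add: bracket_self)
  also have "\<dots> = br x x + br x y + (br y x + br y y)"
    by (simp add: linear_map_add[OF linear_bracket_left] linear_map_add[OF linear_bracket_right])
  finally show ?thesis by (simp add: bracket_self eq_neg_iff_add_eq_0)
qed

lemma mult_scale_right: "mB c (sB s v) = sB s (mB c v)"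
  by (rule linear_map_scale[OF linear_mult_right])

lemma linear_ce_action_term:
  assumes f: "multilinear sL sB n f" and l: "length xs = Suc n"
    and i: "i < Suc n" and a: "a < Suc n"
  shows "Vector_Spaces.linear sL sB (\<lambda>u. \<psi> (xs[i := u] ! a) (f (del a (xs[i := u]))))"
proof (cases "a = i")
  case True
  with l i show ?thesis by (simp add: del_update_same linear_anchor_left)
next
  case False
  have "Vector_Spaces.linear sL sB (\<lambda>u. f ((del a xs)[pos_after_del a i := u]))"
    using False l i a pos_after_del_less_length[of a i xs]
    by (intro multilinear_linear_at[OF f]) (auto simp: length_del)
  with False l i a show ?thesis
    by (simp add: del_update linear_compose_fun[OF _ linear_anchor_right])
qed

lemma linear_ce_bracket_term:
  assumes f: "multilinear sL sB n f" and l: "length xs = Suc n" and i: "i < Suc n"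
    and jk: "j < k" "k < Suc n"
  shows "Vector_Spaces.linear sL sB
    (\<lambda>u. f (br (xs[i := u] ! j) (xs[i := u] ! k) # del j (del k (xs[i := u]))))"
proof -
  obtain n' where n: "n = Suc n'" using jk by (cases n) auto
  have R: "length (del j (del k xs)) = n'" using l jk n by (simp add: length_del)
  have head: "Vector_Spaces.linear sL sB (\<lambda>v. f (v # del j (del k xs)))"
    using multilinear_linear_head[of sL sB n' f] f n R by simp
  consider (J) "j = i" | (K) "k = i" | (N) "j \<noteq> i" "k \<noteq> i" by blast
  then show ?thesis
  proof cases
    case J
    with l jk have "xs[i := u] ! j = u" "xs[i := u] ! k = xs ! k"
      "del j (del k (xs[i := u])) = del j (del k xs)" for u
      by (simp_all add: del_update pos_after_del_def del_update_same)
    with linear_compose_fun[OF linear_bracket_left head] show ?thesis by simp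
  next
    case K
    with l jk have "xs[i := u] ! j = xs ! j" "xs[i := u] ! k = u"
      "del j (del k (xs[i := u])) = del j (del k xs)" for u
      by (simp_all add: del_update_same)
    with linear_compose_fun[OF linear_bracket_right head] show ?thesis by simp
  next
    case N
    have jp: "j \<noteq> pos_after_del k i" using N jk by (auto simp: pos_after_del_def)
    have pk: "pos_after_del k i < length (del k xs)"
      using pos_after_del_less_length[of k i xs] N l i jk by simp
    have jl: "j < length (del k xs)" using l jk by (simp add: length_del)
    have "Vector_Spaces.linear sL sB
        (\<lambda>u. f ((br (xs ! j) (xs ! k) # del j (del k xs))
          [Suc (pos_after_del j (pos_after_del k i)) := u]))"
      by (rule multilinear_linear_at[OF f]) (use R n pos_after_del_less_length[OF jp pk jl] in auto)
    with N l i jk jp pk jl show ?thesis by (simp add: del_update)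
  qed
qed

lemma multilinear_ce_diff:
  assumes f: "multilinear sL sB n f"
  shows "multilinear sL sB (Suc n) (ce_diff sB br \<psi> f)"
proof (rule multilinearI)
  fix xs :: "'l list" and i assume l: "length xs = Suc n" and i: "i < Suc n"
  show "Vector_Spaces.linear sL sB (\<lambda>u. ce_diff sB br \<psi> f (xs[i := u]))"
    unfolding ce_diff_def length_list_update l
    by (intro linear_add_fun linear_sum_fun[OF vector_space_L vector_space_B] linear_scale_fun
        linear_ce_action_term[OF f l i] linear_ce_bracket_term[OF f l i]) auto
qed

definition B_linear :: "nat \<Rightarrow> ('l list \<Rightarrow> 'b) \<Rightarrow> bool" where
  "B_linear n f \<longleftrightarrow> (\<forall>ys j b. length ys = n \<and> j < n \<longrightarrow> f (ys[j := \<mu> b (ys ! j)]) = mB b (f ys))"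

lemma B_linearD:
  "B_linear n f \<Longrightarrow> length ys = n \<Longrightarrow> j < n \<Longrightarrow> f (ys[j := \<mu> b (ys ! j)]) = mB b (f ys)"
  by (simp add: B_linear_def)

lemma B_linearI_head:
  fixes f :: "'l list \<Rightarrow> 'b"
  assumes "skew n f" and head: "\<And>b v R. Suc (length R) = n \<Longrightarrow> f (\<mu> b v # R) = mB b (f (v # R))"
  shows "B_linear n f"
  unfolding B_linear_def
proof (intro allI impI, elim conjE)
  fix ys :: "'l list" and j b assume l: "length ys = n" and j: "j < n"
  note to_front = skew_nth_to_front[OF vector_space_B assms(1)]
  have "f (ys[j := \<mu> b (ys ! j)]) = sB ((-1) ^ j) (f (\<mu> b (ys ! j) # del j ys))"
    using to_front[of "ys[j := \<mu> b (ys ! j)]" j] l j by (simp add: del_update_same)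
  also have "\<dots> = mB b (sB ((-1) ^ j) (f (ys ! j # del j ys)))"
    using head[of "del j ys"] l j by (simp add: length_del mult_scale_right)
  also have "sB ((-1) ^ j) (f (ys ! j # del j ys)) = f ys"
    using to_front[OF l j] by simp
  finally show "f (ys[j := \<mu> b (ys ! j)]) = mB b (f ys)" .
qed

lemma B_linear_head:
  "B_linear n f \<Longrightarrow> Suc (length R) = n \<Longrightarrow> f (\<mu> b v # R) = mB b (f (v # R))"
  using B_linearD[of n f "v # R" 0] by simp

text \<open>Replacing \<open>x\<^sub>i\<close> by \<open>b x\<^sub>i\<close> in \<open>df\<close> yields \<open>b df\<close> plus these terms, coming from the
  Leibniz rule for \<open>\<psi>\<close> and from \<open>[x, b y] = \<psi>(x,b) y + b [x, y]\<close> respectively.\<close>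

definition action_defect :: "('l list \<Rightarrow> 'b) \<Rightarrow> 'b \<Rightarrow> 'l list \<Rightarrow> nat \<Rightarrow> 'b" where
  "action_defect f b xs a = sB ((-1) ^ a) (mB (\<psi> (xs ! a) b) (f (del a xs)))"

definition bracket_defect :: "('l list \<Rightarrow> 'b) \<Rightarrow> 'b \<Rightarrow> 'l list \<Rightarrow> nat \<Rightarrow> nat \<Rightarrow> 'b" where
  "bracket_defect f b xs i a =
     sB ((-1) ^ (a + i)) (mB (\<psi> (xs ! a) b) (f (xs ! i # del (min a i) (del (max a i) xs))))"

lemma ce_action_term_smult:
  assumes fB: "B_linear n f" and l: "length xs = Suc n" and i: "i < Suc n" and a: "a < Suc n"
  shows "sB ((-1) ^ a) (\<psi> (xs[i := \<mu> b (xs ! i)] ! a) (f (del a (xs[i := \<mu> b (xs ! i)])))) =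
    mB b (sB ((-1) ^ a) (\<psi> (xs ! a) (f (del a xs)))) +
    (if a = i then 0 else action_defect f b xs a)"
proof (cases "a = i")
  case True
  with l i show ?thesis by (simp add: del_update_same anchor_smult mult_scale_right)
next
  case False
  have "del a (xs[i := \<mu> b (xs ! i)]) =
      (del a xs)[pos_after_del a i := \<mu> b (del a xs ! pos_after_del a i)]"
    using False l i a by (simp add: del_update nth_pos_after_del)
  also have "f \<dots> = mB b (f (del a xs))"
    using B_linearD[OF fB] False l i a pos_after_del_less_length[of a i xs]
    by (simp add: length_del)
  finally show ?thesis
    using False l i a
    by (simp add: action_defect_def anchor_mult mult_scale_right B.scale_right_distrib)
qed

lemma B_linear_bracket_term_other:
  assumes fB: "B_linear n f" and l: "length xs = Suc n" and i: "i < Suc n"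
    and jk: "j < k" "k < Suc n" and "j \<noteq> i" "k \<noteq> i"
  shows "f (br (xs ! j) (xs ! k) # del j (del k (xs[i := \<mu> b (xs ! i)]))) =
    mB b (f (br (xs ! j) (xs ! k) # del j (del k xs)))"
proof -
  have jp: "j \<noteq> pos_after_del k i" using assms by (auto simp: pos_after_del_def)
  have pk: "pos_after_del k i < length (del k xs)"
    using pos_after_del_less_length[of k i xs] assms by simp
  have jl: "j < length (del k xs)" using l jk by (simp add: length_del)
  let ?p = "pos_after_del j (pos_after_del k i)"
  let ?ys = "br (xs ! j) (xs ! k) # del j (del k xs)"
  have "del j (del k (xs[i := \<mu> b (xs ! i)])) = (del j (del k xs))[?p := \<mu> b (xs ! i)]"
    using assms jp pk jl by (simp add: del_update)
  moreover have "del j (del k xs) ! ?p = xs ! i"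
    using nth_pos_after_del[OF jp pk jl] nth_pos_after_del[of k i xs] assms by simp
  ultimately have "br (xs ! j) (xs ! k) # del j (del k (xs[i := \<mu> b (xs ! i)])) =
      ?ys[Suc ?p := \<mu> b (?ys ! Suc ?p)]"
    by simp
  also have "f \<dots> = mB b (f ?ys)"
    using B_linearD[OF fB, of ?ys "Suc ?p"] l jk pos_after_del_less_length[OF jp pk jl]
    by (simp add: length_del)
  finally show ?thesis .
qed

lemma ce_bracket_term_smult:
  assumes f: "multilinear sL sB n f" and fB: "B_linear n f"
    and l: "length xs = Suc n" and i: "i < Suc n" and jk: "j < k" "k < Suc n"
  shows "sB ((-1) ^ (j + k)) (f (br (xs[i := \<mu> b (xs ! i)] ! j) (xs[i := \<mu> b (xs ! i)] ! k) #
      del j (del k (xs[i := \<mu> b (xs ! i)])))) =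
    mB b (sB ((-1) ^ (j + k)) (f (br (xs ! j) (xs ! k) # del j (del k xs)))) +
    ((if j = i then - bracket_defect f b xs i k else 0) +
     (if k = i then bracket_defect f b xs i j else 0))"
proof -
  define x where "x = xs ! i"
  define R where "R = del j (del k xs)"
  have R: "Suc (length R) = n" using l jk by (simp add: R_def length_del)
  have head: "Vector_Spaces.linear sL sB (\<lambda>v. f (v # R))"
    using multilinear_linear_head[of sL sB "length R" f R] f R by simp
  consider (J) "j = i" | (K) "k = i" | (N) "j \<noteq> i" "k \<noteq> i" by blast
  then show ?thesis
  proof cases
    case J
    have "br (\<mu> b x) (xs ! k) = - \<mu> (\<psi> (xs ! k) b) x + \<mu> b (br x (xs ! k))"
      using bracket_anticomm[of "\<mu> b x" "xs ! k"] bracket_smult[of "xs ! k" b x]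
        bracket_anticomm[of "xs ! k" x]
      by (simp add: linear_map_neg[OF linear_smult_right])
    then have "f (br (\<mu> b x) (xs ! k) # R) =
        - mB (\<psi> (xs ! k) b) (f (x # R)) + mB b (f (br x (xs ! k) # R))"
      using R by (simp add: linear_map_diff[OF head] B_linear_head[OF fB])
    with J jk l show ?thesis
      by (simp add: x_def R_def bracket_defect_def del_update pos_after_del_def del_update_same
          mult_scale_right B.scale_right_diff_distrib add.commute)
  next
    case K
    have "f (br (xs ! j) (\<mu> b x) # R) =
        mB (\<psi> (xs ! j) b) (f (x # R)) + mB b (f (br (xs ! j) x # R))"
      using R by (simp add: bracket_smult linear_map_add[OF head] B_linear_head[OF fB])
    with K jk l show ?thesis
      by (simp add: x_def R_def bracket_defect_def del_update_same mult_scale_right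
          B.scale_right_distrib)
  next
    case N
    with B_linear_bracket_term_other[OF fB l i jk] show ?thesis
      by (simp add: x_def mult_scale_right)
  qed
qed

lemma action_defect_eq_bracket_defect:
  assumes sk: "skew n f" and l: "length xs = Suc n" and i: "i < Suc n" and a: "a < Suc n" "a \<noteq> i"
  shows "action_defect f b xs a =
    (if i < a then bracket_defect f b xs i a else - bracket_defect f b xs i a)"
proof -
  have la: "length (del a xs) = n" using a l by (simp add: length_del)
  have front: "f (del a xs) = sB ((-1) ^ p) (f (xs ! i # del p (del a xs)))"
    if "pos_after_del a i = p" for p
    using skew_nth_to_front[OF vector_space_B sk la, of p] nth_pos_after_del[of a i xs]
      pos_after_del_less_length[of a i xs] that a l i by (simp add: length_del)
  show ?thesis
  proof (cases "i < a")
    case True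
    with front[of i] show ?thesis
      by (simp add: action_defect_def bracket_defect_def pos_after_del_def mult_scale_right
          power_add mult.commute)
  next
    case False
    with a obtain i' where i': "i = Suc i'" and "a < i" by (cases i) auto
    moreover have "del i' (del a xs) = del a (del i xs)"
      using del_del_less[of a i xs] i' \<open>a < i\<close> l i by simp
    ultimately show ?thesis
      using front[of i'] l i
      by (simp add: action_defect_def bracket_defect_def pos_after_del_def mult_scale_right
          power_add mult.commute)
  qed
qed

theorem B_linear_ce_diff:
  assumes f: "multilinear sL sB n f" and sk: "skew n f" and fB: "B_linear n f"
  shows "B_linear (Suc n) (ce_diff sB br \<psi> f)"
  unfolding B_linear_def
proof (intro allI impI, elim conjE)
  fix xs :: "'l list" and i b assume l: "length xs = Suc n" and i: "i < Suc n"
  let ?T1 = "\<lambda>a. sB ((-1) ^ a) (\<psi> (xs ! a) (f (del a xs)))"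
  let ?T2 = "\<lambda>j k. sB ((-1) ^ (j + k)) (f (br (xs ! j) (xs ! k) # del j (del k xs)))"
  let ?e1 = "\<lambda>a. if a = i then 0 else action_defect f b xs a"
  let ?e2 = "\<lambda>j k. (if j = i then - bracket_defect f b xs i k else 0) +
    (if k = i then bracket_defect f b xs i j else 0)"
  have "ce_diff sB br \<psi> f (xs[i := \<mu> b (xs ! i)]) =
      (\<Sum>a<Suc n. mB b (?T1 a) + ?e1 a) + (\<Sum>k<Suc n. \<Sum>j<k. mB b (?T2 j k) + ?e2 j k)"
    using l i by (simp add: ce_diff_def ce_action_term_smult[OF fB] ce_bracket_term_smult[OF f fB])
  also have "\<dots> = mB b ((\<Sum>a<Suc n. ?T1 a) + (\<Sum>k<Suc n. \<Sum>j<k. ?T2 j k)) +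
      ((\<Sum>a<Suc n. ?e1 a) + (\<Sum>k<Suc n. \<Sum>j<k. ?e2 j k))"
    by (simp add: sum.distrib linear_map_add[OF linear_mult_right]
        linear_map_sum[OF linear_mult_right])
  also have "(\<Sum>a<Suc n. ?e1 a) + (\<Sum>k<Suc n. \<Sum>j<k. ?e2 j k) = 0"
    using action_defect_eq_bracket_defect[OF sk l i] by (intro sum_defects_cancel[OF i]) simp
  finally show "ce_diff sB br \<psi> f (xs[i := \<mu> b (xs ! i)]) = mB b (ce_diff sB br \<psi> f xs)"
    using l by (simp add: ce_diff_def)
qed

end

section \<open>Induced maps\<close>

locale lie_rinehart_coalgebra =
  coassoc_coalgebra sC \<Delta> + lie_rinehart_pair sL sB br mB \<mu> \<psi>
  for sC :: "'k::field \<Rightarrow> 'c::ab_group_add \<Rightarrow> 'c" and \<Delta> :: "'c \<Rightarrow> ('c \<times> 'c) list"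
    and sL :: "'k \<Rightarrow> 'l::ab_group_add \<Rightarrow> 'l" and sB :: "'k \<Rightarrow> 'b::ab_group_add \<Rightarrow> 'b"
    and br :: "'l \<Rightarrow> 'l \<Rightarrow> 'l" and mB :: "'b \<Rightarrow> 'b \<Rightarrow> 'b"
    and \<mu> :: "'b \<Rightarrow> 'l \<Rightarrow> 'l" and \<psi> :: "'l \<Rightarrow> 'b \<Rightarrow> 'b"
begin

lemma linear_mu_bar:
  assumes \<beta>: "Vector_Spaces.linear sC sB \<beta>" and g: "Vector_Spaces.linear sC sL g"
  shows "Vector_Spaces.linear sC sL (mu_bar \<Delta> \<mu> \<beta> g)"
proof -
  have "multilinear sC sL 2 (\<lambda>zs. \<mu> (\<beta> (zs ! 0)) (g (zs ! 1)))"
  proof (rule multilinearI)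
    fix xs :: "'c list" and j :: nat assume "length xs = 2" and "j < 2"
    then consider "j = 0" "length xs = 2" | "j = 1" "length xs = 2" by linarith
    then show "Vector_Spaces.linear sC sL (\<lambda>x. \<mu> (\<beta> (xs[j := x] ! 0)) (g (xs[j := x] ! 1)))"
      by cases (simp_all add: linear_compose_fun[OF \<beta> linear_smult_left]
          linear_compose_fun[OF g linear_smult_right])
  qed
  from linear_sum_coproduct[OF vector_space_L this] show ?thesis
    by (simp add: mu_bar_def[abs_def])
qed

lemma multilinear_mult_apply_all_del:
  assumes D: "multilinear sL sB (Suc n) D" and \<beta>: "Vector_Spaces.linear sC sB \<beta>"
    and gs: "\<forall>g\<in>set gs. Vector_Spaces.linear sC sL g" "length gs = Suc n" and i: "i < Suc n"
  shows "multilinear sC sB (Suc (Suc n)) (\<lambda>t. mB (\<beta> (t ! i)) (D (apply_all gs (del i t))))"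
proof (rule multilinearI)
  fix ts :: "'c list" and j assume l: "length ts = Suc (Suc n)" and j: "j < Suc (Suc n)"
  show "Vector_Spaces.linear sC sB
    (\<lambda>x. mB (\<beta> (ts[j := x] ! i)) (D (apply_all gs (del i (ts[j := x])))))"
  proof (cases "j = i")
    case True
    with l i show ?thesis by (simp add: del_update_same linear_compose_fun[OF \<beta> linear_mult_left])
  next
    case False
    have ld: "length (del i ts) = Suc n" and pj: "pos_after_del i j < Suc n"
      using pos_after_del_less_length[of i j ts] False l i j by (simp_all add: length_del)
    have "apply_all gs (del i (ts[j := x])) =
        (apply_all gs (del i ts))[pos_after_del i j := (gs ! pos_after_del i j) x]" for x
      using False l i j ld pj gs by (simp add: del_update apply_all_update_arg)
    moreover have "Vector_Spaces.linear sC sB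
        (\<lambda>x. D ((apply_all gs (del i ts))[pos_after_del i j := (gs ! pos_after_del i j) x]))"
      by (intro linear_compose_fun[OF _ multilinear_linear_at[OF D]]) (use gs ld pj in auto)
    ultimately show ?thesis
      using False by (simp add: linear_compose_fun[OF _ linear_mult_right])
  qed
qed

lemma induced_mu_bar_update:
  assumes D: "multilinear sL sB (Suc n) D" and gs: "length gs = Suc n" and i: "i < Suc n"
  shows "induced \<Delta> D (gs[i := mu_bar \<Delta> \<mu> \<beta> (gs ! i)]) c =
    sum_list (map (\<lambda>t.
      D ((apply_all gs (del i t))[i := \<mu> (\<beta> (t ! i)) (apply_all gs (del i t) ! i)]))
      (coproduct_at i (itcop \<Delta> n c)))"
proof -
  have "D (apply_all (gs[i := mu_bar \<Delta> \<mu> \<beta> (gs ! i)]) s) =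
    sum_list (map (\<lambda>p. D ((apply_all gs s)[i := \<mu> (\<beta> (fst p)) ((gs ! i) (snd p))])) (\<Delta> (s ! i)))"
    if "length s = Suc n" for s
    using that gs i
    by (simp add: apply_all_update_fun mu_bar_def
        linear_map_sum_list[OF multilinear_linear_at[OF D]])
  moreover have "(apply_all gs (del i t))[i := \<mu> (\<beta> (t ! i)) (apply_all gs (del i t) ! i)] =
      (apply_all gs s)[i := \<mu> (\<beta> (fst p)) ((gs ! i) (snd p))]"
    if "length s = Suc n" and "t = take i s @ fst p # snd p # drop (Suc i) s" for s t p
  proof -
    have "del i t = s[i := snd p]" using that i by (simp add: del_def upd_conv_take_nth_drop)
    with that gs i show ?thesis by (simp add: apply_all_update_arg nth_append)
  qed
  ultimately show ?thesis
    using gs by (simp add: induced_def sum_list_coproduct_at length_itcop cong: map_cong)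
qed

theorem hom_linear_if_B_linear:
  assumes D: "multilinear sL sB (Suc n) D" and DB: "B_linear (Suc n) D"
  shows "hom_linear sC sL sB \<Delta> mB \<mu> (Suc n) D"
  unfolding hom_linear_def
proof (intro allI impI, elim conjE)
  fix i \<beta> gs c
  assume i: "i < Suc n" and gs: "length gs = Suc n" and \<beta>: "Vector_Spaces.linear sC sB \<beta>"
    and gs_lin: "\<forall>g\<in>set gs. Vector_Spaces.linear sC sL g"
  let ?M = "\<lambda>t. mB (\<beta> (t ! i)) (D (apply_all gs (del i t)))"
  have "D ((apply_all gs (del i t))[i := \<mu> (\<beta> (t ! i)) (apply_all gs (del i t) ! i)]) = ?M t"
    if "t \<in> set (coproduct_at i (itcop \<Delta> n c))" for t
  proof -
    have "length t = Suc (Suc n)"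
      using length_coproduct_at[OF _ i that] length_itcop by blast
    with B_linearD[OF DB, of "apply_all gs (del i t)" i "\<beta> (t ! i)"] gs i show ?thesis
      by (simp add: length_del)
  qed
  then have "induced \<Delta> D (gs[i := mu_bar \<Delta> \<mu> \<beta> (gs ! i)]) c =
      sum_list (map ?M (coproduct_at i (itcop \<Delta> n c)))"
    unfolding induced_mu_bar_update[OF D gs i] by (simp cong: map_cong)
  also have "\<dots> = sum_list (map ?M (itcop \<Delta> (Suc n) c))"
    using tensor_eq_coproduct_at_itcop[of i n c] i
      multilinear_mult_apply_all_del[OF D \<beta> gs_lin gs i]
    by (intro tensor_eq_multilinear[OF vector_space_B]) simp_all
  finally show "induced \<Delta> D (gs[i := mu_bar \<Delta> \<mu> \<beta> (gs ! i)]) c =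
    sum_list (map ?M (itcop \<Delta> (Suc n) c))" .
qed

theorem hom_linear_if_itcop_vanishes:
  assumes van: "itcop_vanishes n" and D: "multilinear sL sB (Suc n) D"
  shows "hom_linear sC sL sB \<Delta> mB \<mu> (Suc n) D"
  unfolding hom_linear_def
proof (intro allI impI, elim conjE)
  fix i \<beta> gs c
  assume i: "i < Suc n" and gs: "length gs = Suc n" and \<beta>: "Vector_Spaces.linear sC sB \<beta>"
    and gs_lin: "\<forall>g\<in>set gs. Vector_Spaces.linear sC sL g"
  have "\<forall>g\<in>set (gs[i := mu_bar \<Delta> \<mu> \<beta> (gs ! i)]). Vector_Spaces.linear sC sL g"
    using gs_lin gs i linear_mu_bar[OF \<beta>] by (auto dest!: set_mp[OF set_update_subset_insert])
  then have "induced \<Delta> D (gs[i := mu_bar \<Delta> \<mu> \<beta> (gs ! i)]) c = 0"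
    using gs
    by (simp add: induced_def sum_list_itcop_eq_0[OF van vector_space_B multilinear_apply_all[OF D]])
  also have "0 =
      sum_list (map (\<lambda>t. mB (\<beta> (t ! i)) (D (apply_all gs (del i t)))) (itcop \<Delta> (Suc n) c))"
    by (rule sum_list_itcop_eq_0[OF itcop_vanishes_Suc[OF van] vector_space_B
          multilinear_mult_apply_all_del[OF D \<beta> gs_lin gs i], symmetric])
  finally show "induced \<Delta> D (gs[i := mu_bar \<Delta> \<mu> \<beta> (gs ! i)]) c =
      sum_list (map (\<lambda>t. mB (\<beta> (t ! i)) (D (apply_all gs (del i t)))) (itcop \<Delta> (Suc n) c))" .
qed

lemma smult_head_map2_scale:
  assumes f: "multilinear sL sB (Suc n) f" and as: "length as = Suc n" and R: "length R = n"
  shows "f ((map2 sL as (v # R))[0 := \<mu> (sB a b) (map2 sL as (v # R) ! 0)]) =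
      sB (a * prod_list as) (f (\<mu> b v # R))"
    and "mB (sB a b) (f (map2 sL as (v # R))) = sB (a * prod_list as) (mB b (f (v # R)))"
proof -
  obtain a' as' where as': "as = a' # as'" using as by (cases as) auto
  have "\<mu> (sB a b) (sL a' v) = sL (a * a') (\<mu> b v)"
    by (simp add: linear_map_scale[OF linear_smult_left] linear_map_scale[OF linear_smult_right])
  then show "f ((map2 sL as (v # R))[0 := \<mu> (sB a b) (map2 sL as (v # R) ! 0)]) =
      sB (a * prod_list as) (f (\<mu> b v # R))"
    using multilinear_map2_scale[OF vector_space_B, of sL "\<mu> b v # R" f "a * a' # as'"] f as R
    by (simp add: as' mult.assoc)
  show "mB (sB a b) (f (map2 sL as (v # R))) = sB (a * prod_list as) (mB b (f (v # R)))"
    using multilinear_map2_scale[OF vector_space_B, of sL "v # R" f as] f as R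
    by (simp add: mult_scale_right linear_map_scale[OF linear_mult_left])
qed

text \<open>Testing Hom(C,B)-linearity against rank-one maps \<open>x \<mapsto> \<phi>(x) v\<close> reduces both sides to
  multiples of one nonzero scalar, the product functional evaluated on \<open>\<Delta>^(n) c\<close>.\<close>

lemma B_linear_head_if_hom_linear:
  assumes nv: "\<not> itcop_vanishes (Suc n)" and f: "multilinear sL sB (Suc n) f"
    and hom: "hom_linear sC sL sB \<Delta> mB \<mu> (Suc n) f" and R: "length R = n"
  shows "f (\<mu> b v # R) = mB b (f (v # R))"
proof -
  obtain c \<phi>s where l: "length \<phi>s = Suc (Suc n)" and lin: "\<forall>\<phi>\<in>set \<phi>s. Vector_Spaces.linear sC (*) \<phi>"
    and S: "sum_list (map (prod_apply \<phi>s) (itcop \<Delta> (Suc n) c)) \<noteq> 0" (is "?S \<noteq> 0")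
    by (rule not_itcop_vanishesE[OF nv])
  then obtain \<phi>0 \<phi>1 \<phi>r where \<phi>s: "\<phi>s = \<phi>0 # \<phi>1 # \<phi>r" and "length \<phi>r = n"
    by (auto simp: length_Suc_conv)
  define \<beta> where "\<beta> = rank_one sB \<phi>0 b"
  define gs where "gs = map2 (rank_one sL) (\<phi>1 # \<phi>r) (v # R)"
  have gs: "length gs = Suc n" using \<open>length \<phi>r = n\<close> R by (simp add: gs_def)
  have \<beta>_lin: "Vector_Spaces.linear sC sB \<beta>"
    unfolding \<beta>_def using lin \<phi>s by (simp add: linear_rank_one vector_space_B)
  have gs_lin: "\<forall>g\<in>set gs. Vector_Spaces.linear sC sL g"
    unfolding gs_def using lin \<phi>s by (auto simp: linear_rank_one vector_space_L set_zip)
  have terms: "f ((apply_all gs (del 0 t))[0 := \<mu> (\<beta> (t ! 0)) (apply_all gs (del 0 t) ! 0)]) =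
        sB (prod_apply \<phi>s t) (f (\<mu> b v # R))"
      "mB (\<beta> (t ! 0)) (f (apply_all gs (del 0 t))) = sB (prod_apply \<phi>s t) (mB b (f (v # R)))"
    if t: "t \<in> set (itcop \<Delta> (Suc n) c)" for t
  proof -
    obtain t0 t1 tr where t_eq: "t = t0 # t1 # tr" and "length tr = n"
      using length_itcop[OF t] by (auto simp: length_Suc_conv)
    define as where "as = apply_all (\<phi>1 # \<phi>r) (t1 # tr)"
    have "apply_all gs (del 0 t) = map2 sL as (v # R)" and "length as = Suc n"
      using t_eq \<open>length tr = n\<close> \<open>length \<phi>r = n\<close> R
      by (simp_all add: as_def gs_def del_0 apply_all_rank_one rank_one_def)
    moreover have "\<beta> (t ! 0) = sB (\<phi>0 t0) b" and "prod_apply \<phi>s t = \<phi>0 t0 * prod_list as"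
      by (simp_all add: t_eq \<phi>s \<beta>_def rank_one_def as_def prod_apply_def)
    ultimately show
      "f ((apply_all gs (del 0 t))[0 := \<mu> (\<beta> (t ! 0)) (apply_all gs (del 0 t) ! 0)]) =
        sB (prod_apply \<phi>s t) (f (\<mu> b v # R))"
      "mB (\<beta> (t ! 0)) (f (apply_all gs (del 0 t))) = sB (prod_apply \<phi>s t) (mB b (f (v # R)))"
      using smult_head_map2_scale[OF f _ R, where as = as and a = "\<phi>0 t0"] by simp_all
  qed
  have "sB ?S (f (\<mu> b v # R)) = induced \<Delta> f (gs[0 := mu_bar \<Delta> \<mu> \<beta> (gs ! 0)]) c"
    by (simp add: induced_mu_bar_update[OF f gs] itcop_Suc_coproduct_at_0[symmetric] terms(1)
        sum_list_scale_left[OF vector_space_B] cong: map_cong)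
  also have "\<dots> =
      sum_list (map (\<lambda>t. mB (\<beta> (t ! 0)) (f (apply_all gs (del 0 t)))) (itcop \<Delta> (Suc n) c))"
    using hom gs \<beta>_lin gs_lin unfolding hom_linear_def by blast
  also have "\<dots> = sB ?S (mB b (f (v # R)))"
    by (simp add: terms(2) sum_list_scale_left[OF vector_space_B] cong: map_cong)
  finally show ?thesis using S by simp
qed

lemma B_linear_if_hom_linear:
  assumes "\<not> itcop_vanishes n" and "multilinear sL sB n f" and "skew n f"
    and "hom_linear sC sL sB \<Delta> mB \<mu> n f"
  shows "B_linear n f"
proof (cases n)
  case 0
  then show ?thesis by (simp add: B_linear_def)
next
  case (Suc n')
  with assms show ?thesis
    by (intro B_linearI_head) (auto intro: B_linear_head_if_hom_linear)
qed

end

theorem theorem1: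
  fixes sC :: "'k::field \<Rightarrow> 'c::ab_group_add \<Rightarrow> 'c"
    and sL :: "'k \<Rightarrow> 'l::ab_group_add \<Rightarrow> 'l"
    and sB :: "'k \<Rightarrow> 'b::ab_group_add \<Rightarrow> 'b"
    and \<Delta> :: "'c \<Rightarrow> ('c \<times> 'c) list"
    and br :: "'l \<Rightarrow> 'l \<Rightarrow> 'l" and mB :: "'b \<Rightarrow> 'b \<Rightarrow> 'b"
    and \<mu> :: "'b \<Rightarrow> 'l \<Rightarrow> 'l" and \<psi> :: "'l \<Rightarrow> 'b \<Rightarrow> 'b"
    and n :: nat and f :: "'l list \<Rightarrow> 'b"
  assumes "coalgebra sC \<Delta>"
    and "lie_rinehart sL sB br mB \<mu> \<psi>"
    and "Alt sL sB n f"
    and "hom_linear sC sL sB \<Delta> mB \<mu> n f"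
  shows "hom_linear sC sL sB \<Delta> mB \<mu> (Suc n) (ce_diff sB br \<psi> f)"
proof -
  interpret lie_rinehart_coalgebra sC \<Delta> sL sB br mB \<mu> \<psi>
    using assms(1,2) by unfold_locales
  from assms(3) have f: "multilinear sL sB n f" and sk: "skew n f"
    by (simp_all add: Alt_def)
  show ?thesis
  proof (cases "itcop_vanishes n")
    case True
    then show ?thesis by (rule hom_linear_if_itcop_vanishes[OF _ multilinear_ce_diff[OF f]])
  next
    case False
    then have "B_linear n f" using f sk assms(4) by (rule B_linear_if_hom_linear)
    with f sk have "B_linear (Suc n) (ce_diff sB br \<psi> f)" by (rule B_linear_ce_diff)
    then show ?thesis by (rule hom_linear_if_B_linear[OF multilinear_ce_diff[OF f]])
  qed
qed

end
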